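(* There is an absolute constant $c>0$ such that the following holds. Let $a$ be a symmetric, sub-gaussian random variable with $\mathbb{E}a^2=1$, let $\mathbf{a}$ be a random vector in $\mathbb{R}^n$ with i.i.d. coordinates distributed as $a$, let $\mathbf{x}\in S^{n-1}$, and define $\mathbf{v}_{\mathbf{x}}=\mathbb{E}\,\mathrm{sign}(\langle\mathbf{a},\mathbf{x}\rangle)\mathbf{a}$. If $\|\mathbf{x}\|_\infty\le c/\mathbb{E}|a|^3$, then $\frac12\le\|\mathbf{v}_{\mathbf{x}}\|_2\le1$.
   Context: $\mathrm{sign}(t)=1$ if $t\ge0$ and $-1$ otherwise. $S^{n-1}$ is the Euclidean unit sphere in $\mathbb{R}^n$. *)

theory Defs
  imports "HOL-Probability.Probability"
begin

definition sign0 :: "real \<Rightarrow> real" where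
  "sign0 t = (if t \<ge> 0 then 1 else -1)"

text \<open>A real random variable, given by its distribution D (a probability measure on the
  Borel sets of the reals), is sub-gaussian if E exp(a^2/K^2) <= 2 for some K > 0.\<close>
definition subgaussian :: "real measure \<Rightarrow> bool" where
  "subgaussian D \<longleftrightarrow> (\<exists>K>0. integrable D (\<lambda>t. exp (t\<^sup>2 / K\<^sup>2)) \<and>
                              (\<integral>t. exp (t\<^sup>2 / K\<^sup>2) \<partial>D) \<le> 2)"

definition symmetric_distr :: "real measure \<Rightarrow> bool" where
  "symmetric_distr D \<longleftrightarrow> distr D borel uminus = D"

end

theory Submission
  imports Defs
begin

text \<open>Write \<open>S = \<langle>a, x\<rangle>\<close>. Testing \<open>v\<^sub>x\<close> against a vector \<open>y\<close> gives
  \<open>\<langle>v\<^sub>x, y\<rangle> = E (sign S \<langle>a, y\<rangle>)\<close>. For \<open>y = v\<^sub>x\<close> this is at most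
  \<open>E |\<langle>a, v\<^sub>x\<rangle>| \<le> sqrt (E \<langle>a, v\<^sub>x\<rangle>\<^sup>2) = \<parallel>v\<^sub>x\<parallel>\<close>, hence \<open>\<parallel>v\<^sub>x\<parallel> \<le> 1\<close>; for \<open>y = x\<close> it is
  \<open>E |S| \<le> \<parallel>v\<^sub>x\<parallel>\<close> by Cauchy-Schwarz.

  The lower bound \<open>E |S| \<ge> 11/20\<close> needs no central limit theorem. Truncate every coordinate
  at \<open>K = 1600 E |a|\<^sup>3\<close> and split \<open>S = T + R\<close> into the truncated part and the tail. Integrating
  the pointwise bound \<open>|t + r| \<ge> (6/7) t\<^sup>2 - (32/343) t\<^sup>4 - 20 r\<^sup>2 - 1/80\<close> reduces everything to
  moments. By symmetry the odd moments of the truncated coordinates vanish, so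
  \<open>E T\<^sup>2 \<ge> 1 - 1/1600\<close>, \<open>E T\<^sup>4 \<le> 3 + K E |a|\<^sup>3 \<Sum> x\<^sub>j\<^sup>4 \<le> 3 + 1/1600\<close> and \<open>E R\<^sup>2 \<le> 1/1600\<close>; the bound on
  \<open>max |x\<^sub>j|\<close> is what makes \<open>\<Sum> x\<^sub>j\<^sup>4\<close> small.\<close>

lemma sign0_measurable [measurable]: "sign0 \<in> borel_measurable borel"
  unfolding sign0_def by measurable

lemma sign0_mult_self: "sign0 s * s = \<bar>s\<bar>"
  by (simp add: sign0_def)

lemma abs_sign0_mult: "\<bar>sign0 s * z\<bar> = \<bar>z\<bar>"
  by (simp add: sign0_def)

text \<open>The quartic touches \<open>\<bar>t\<bar>\<close> at \<open>\<bar>t\<bar> = 7/4\<close>.\<close>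
lemma quartic_le_abs: "(6/7) * t^2 - (32/343) * t^4 \<le> \<bar>t::real\<bar>"
proof -
  have "0 \<le> \<bar>t\<bar> * (4 * \<bar>t\<bar> - 7)^2 * (2 * \<bar>t\<bar> + 7)" by simp
  also have "\<dots> = 343 * \<bar>t\<bar> - 294 * \<bar>t\<bar>^2 + 32 * \<bar>t\<bar>^4"
    by (simp add: power2_eq_square power4_eq_xxxx algebra_simps)
  finally show ?thesis by (simp add: power_even_abs)
qed

lemma abs_le_square_plus: "\<bar>r::real\<bar> \<le> 20 * r^2 + 1/80"
proof -
  have "0 \<le> 20 * (\<bar>r\<bar> - 1/40)^2" by simp
  also have "\<dots> = 20 * r^2 - \<bar>r\<bar> + 1/80"
    by (simp add: power2_diff power2_abs power2_eq_square algebra_simps)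
  finally show ?thesis by simp
qed

lemma sum_power4_le:
  fixes x :: "'i \<Rightarrow> real"
  assumes "\<forall>j\<in>I. \<bar>x j\<bar> \<le> b"
  shows "(\<Sum>j\<in>I. (x j)^4) \<le> b^2 * (\<Sum>j\<in>I. (x j)^2)"
proof -
  have "(x j)^2 * (x j)^2 \<le> b^2 * (x j)^2" if "j \<in> I" for j
  proof (rule mult_right_mono)
    show "(x j)^2 \<le> b^2"
      using assms that by (metis abs_ge_zero power2_abs power_mono)
  qed simp
  then have "(\<Sum>j\<in>I. (x j)^4) \<le> (\<Sum>j\<in>I. b^2 * (x j)^2)"
    by (intro sum_mono) (simp add: power4_eq_xxxx power2_eq_square mult.assoc)
  then show ?thesis
    by (simp add: sum_distrib_left)
qed

lemma (in finite_measure) integrable_power_of_bounded: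
  fixes f :: "'a \<Rightarrow> real"
  assumes "f \<in> borel_measurable M" and "\<And>x. \<bar>f x\<bar> \<le> B"
  shows "integrable M (\<lambda>x. f x ^ p)"
  by (rule integrable_const_bound[where B = "B ^ p"])
     (use assms in \<open>auto simp: power_abs intro!: power_mono\<close>)

lemma (in prob_space) expectation_abs_le_sqrt_second_moment:
  fixes Z :: "'a \<Rightarrow> real"
  assumes "Z \<in> borel_measurable M" and "integrable M (\<lambda>\<omega>. Z \<omega> ^ 2)"
  shows "expectation (\<lambda>\<omega>. \<bar>Z \<omega>\<bar>) \<le> sqrt (expectation (\<lambda>\<omega>. Z \<omega> ^ 2))"
proof (rule real_le_rsqrt)
  have "integrable M Z"
    using assms by (rule square_integrable_imp_integrable)
  then show "(expectation (\<lambda>\<omega>. \<bar>Z \<omega>\<bar>))\<^sup>2 \<le> expectation (\<lambda>\<omega>. Z \<omega> ^ 2)"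
    using variance_positive[of "\<lambda>\<omega>. \<bar>Z \<omega>\<bar>"] variance_eq[of "\<lambda>\<omega>. \<bar>Z \<omega>\<bar>"] assms(2) by simp
qed

lemma (in prob_space) expectation_abs_sum_ge_quartic:
  fixes T R :: "'a \<Rightarrow> real"
  assumes "integrable M (\<lambda>\<omega>. T \<omega> ^ 2)" "integrable M (\<lambda>\<omega>. T \<omega> ^ 4)"
    and "integrable M (\<lambda>\<omega>. R \<omega> ^ 2)" and "integrable M (\<lambda>\<omega>. T \<omega> + R \<omega>)"
  shows "(6/7) * expectation (\<lambda>\<omega>. T \<omega> ^ 2) - (32/343) * expectation (\<lambda>\<omega>. T \<omega> ^ 4)
           - 20 * expectation (\<lambda>\<omega>. R \<omega> ^ 2) - 1/80
         \<le> expectation (\<lambda>\<omega>. \<bar>T \<omega> + R \<omega>\<bar>)"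
proof -
  have "(6/7) * expectation (\<lambda>\<omega>. T \<omega> ^ 2) - (32/343) * expectation (\<lambda>\<omega>. T \<omega> ^ 4)
          - 20 * expectation (\<lambda>\<omega>. R \<omega> ^ 2) - 1/80
        = expectation (\<lambda>\<omega>. (6/7) * T \<omega> ^ 2 - (32/343) * T \<omega> ^ 4 - 20 * R \<omega> ^ 2 - 1/80)"
    using assms by (simp add: prob_space)
  also have "\<dots> \<le> expectation (\<lambda>\<omega>. \<bar>T \<omega> + R \<omega>\<bar>)"
  proof (rule integral_mono)
    fix \<omega>
    show "(6/7) * T \<omega> ^ 2 - (32/343) * T \<omega> ^ 4 - 20 * R \<omega> ^ 2 - 1/80 \<le> \<bar>T \<omega> + R \<omega>\<bar>"
      using quartic_le_abs[of "T \<omega>"] abs_le_square_plus[of "R \<omega>"] by linarith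
  qed (use assms in auto)
  finally show ?thesis .
qed

definition truncation :: "real \<Rightarrow> real \<Rightarrow> real" where
  "truncation K t = (if \<bar>t\<bar> \<le> K then t else 0)"

lemma truncation_measurable [measurable]: "truncation K \<in> borel_measurable borel"
  unfolding truncation_def by measurable

lemma abs_truncation_le: "0 \<le> K \<Longrightarrow> \<bar>truncation K t\<bar> \<le> K"
  by (simp add: truncation_def)

lemma truncation_uminus: "truncation K (- t) = - truncation K t"
  by (simp add: truncation_def)

definition sign_correlation :: "real measure \<Rightarrow> 'i set \<Rightarrow> ('i \<Rightarrow> real) \<Rightarrow> 'i \<Rightarrow> real" where
  "sign_correlation M I x i = (\<integral>\<omega>. sign0 (\<Sum>j\<in>I. \<omega> j * x j) * \<omega> i \<partial>Pi\<^sub>M I (\<lambda>_. M))"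

context real_distribution
begin

lemma prob_space_PiM_power: "prob_space (Pi\<^sub>M I (\<lambda>_. M))"
  by (rule prob_space_PiM) (rule prob_space_axioms)

lemma measurable_linear_form [measurable]:
  fixes f :: "real \<Rightarrow> real"
  assumes [measurable]: "f \<in> borel_measurable borel"
  shows "(\<lambda>\<omega>. \<Sum>j\<in>I. a j * f (\<omega> j)) \<in> borel_measurable (Pi\<^sub>M I (\<lambda>_. M))"
proof (rule borel_measurable_sum)
  fix j assume "j \<in> I"
  then show "(\<lambda>\<omega>. a j * f (\<omega> j)) \<in> borel_measurable (Pi\<^sub>M I (\<lambda>_. M))"
    by measurable
qed

lemma integral_PiM_component:
  fixes g :: "real \<Rightarrow> real"
  assumes "i \<in> I" and "integrable M g"
  shows "integrable (Pi\<^sub>M I (\<lambda>_. M)) (\<lambda>\<omega>. g (\<omega> i))"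
    and "(\<integral>\<omega>. g (\<omega> i) \<partial>Pi\<^sub>M I (\<lambda>_. M)) = (\<integral>t. g t \<partial>M)"
proof -
  have component: "(\<lambda>\<omega>. \<omega> i) \<in> Pi\<^sub>M I (\<lambda>_. M) \<rightarrow>\<^sub>M M"
    using assms(1) by measurable
  have g: "g \<in> borel_measurable M"
    using assms(2) by auto
  have "distr (Pi\<^sub>M I (\<lambda>_. M)) M (\<lambda>\<omega>. \<omega> i) = M"
    using assms(1) prob_space_axioms by (intro distr_PiM_component)
  then show "integrable (Pi\<^sub>M I (\<lambda>_. M)) (\<lambda>\<omega>. g (\<omega> i))"
    and "(\<integral>\<omega>. g (\<omega> i) \<partial>Pi\<^sub>M I (\<lambda>_. M)) = (\<integral>t. g t \<partial>M)"
    using integrable_distr_eq[OF component g] integral_distr[OF component g] assms(2) by simp_all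
qed

lemma integrable_linear_form_sq:
  fixes f :: "real \<Rightarrow> real"
  assumes "finite I" and [measurable]: "f \<in> borel_measurable borel"
    and "integrable M (\<lambda>t. f t ^ 2)"
  shows "integrable (Pi\<^sub>M I (\<lambda>_. M)) (\<lambda>\<omega>. (\<Sum>j\<in>I. a j * f (\<omega> j)) ^ 2)"
proof (rule Bochner_Integration.integrable_bound)
  have "integrable (Pi\<^sub>M I (\<lambda>_. M)) (\<lambda>\<omega>. f (\<omega> j) ^ 2)" if "j \<in> I" for j
    using integral_PiM_component(1)[OF that, of "\<lambda>t. f t ^ 2"] assms(3) by simp
  then show "integrable (Pi\<^sub>M I (\<lambda>_. M)) (\<lambda>\<omega>. real (card I) * (\<Sum>j\<in>I. (a j)\<^sup>2 * f (\<omega> j) ^ 2))"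
    by auto
  show "AE \<omega> in Pi\<^sub>M I (\<lambda>_. M). norm ((\<Sum>j\<in>I. a j * f (\<omega> j)) ^ 2)
          \<le> norm (real (card I) * (\<Sum>j\<in>I. (a j)\<^sup>2 * f (\<omega> j) ^ 2))"
  proof (rule AE_I2)
    fix \<omega>
    have "(\<Sum>j\<in>I. a j * f (\<omega> j) * 1) ^ 2 \<le> (\<Sum>j\<in>I. (a j * f (\<omega> j))\<^sup>2) * (\<Sum>j\<in>I. 1\<^sup>2)"
      by (rule Cauchy_Schwarz_ineq_sum)
    then show "norm ((\<Sum>j\<in>I. a j * f (\<omega> j)) ^ 2) \<le> norm (real (card I) * (\<Sum>j\<in>I. (a j)\<^sup>2 * f (\<omega> j) ^ 2))"
      by (simp add: power_mult_distrib mult.commute sum_nonneg)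
  qed
qed measurable

lemma integrable_linear_form_power:
  fixes f :: "real \<Rightarrow> real"
  assumes [measurable]: "f \<in> borel_measurable borel" and "\<And>t. \<bar>f t\<bar> \<le> B"
  shows "integrable (Pi\<^sub>M I (\<lambda>_. M)) (\<lambda>\<omega>. (\<Sum>j\<in>I. a j * f (\<omega> j)) ^ p)"
proof -
  interpret P: prob_space "Pi\<^sub>M I (\<lambda>_. M)"
    by (rule prob_space_PiM_power)
  have "\<bar>\<Sum>j\<in>I. a j * f (\<omega> j)\<bar> \<le> (\<Sum>j\<in>I. \<bar>a j\<bar> * B)" for \<omega>
    by (rule order_trans[OF sum_abs sum_mono]) (simp add: abs_mult assms(2) mult_left_mono)
  then show ?thesis
    by (intro P.integrable_power_of_bounded) measurable
qed

lemma integral_odd_eq_zero: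
  fixes g :: "real \<Rightarrow> real"
  assumes "symmetric_distr M" and "g \<in> borel_measurable borel" and "\<And>t. g (- t) = - g t"
  shows "(\<integral>t. g t \<partial>M) = 0"
proof -
  have "(\<integral>t. g t \<partial>M) = (\<integral>t. g t \<partial>distr M borel uminus)"
    using assms(1) by (simp add: symmetric_distr_def)
  also have "\<dots> = (\<integral>t. g (- t) \<partial>M)"
    using assms(2) by (intro integral_distr) auto
  also have "\<dots> = - (\<integral>t. g t \<partial>M)"
    by (simp add: assms(3))
  finally show ?thesis by simp
qed

lemma integral_affine_sq:
  fixes f :: "real \<Rightarrow> real"
  assumes "integrable M f" and "integrable M (\<lambda>t. f t ^ 2)" and "(\<integral>t. f t \<partial>M) = 0"
  shows "(\<integral>t. (A * f t + c) ^ 2 \<partial>M) = A^2 * (\<integral>t. f t ^ 2 \<partial>M) + c^2"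
proof -
  have "(\<lambda>t. (A * f t + c) ^ 2) = (\<lambda>t. A^2 * f t ^ 2 + (2 * A * c) * f t + c^2)"
    by (simp add: fun_eq_iff power2_eq_square algebra_simps)
  then show ?thesis
    using assms prob_space by simp
qed

lemma integral_affine_fourth:
  fixes f :: "real \<Rightarrow> real"
  assumes [measurable]: "f \<in> borel_measurable borel" and "\<And>t. \<bar>f t\<bar> \<le> B"
    and "(\<integral>t. f t \<partial>M) = 0" and "(\<integral>t. f t ^ 3 \<partial>M) = 0"
  shows "(\<integral>t. (A * f t + c) ^ 4 \<partial>M)
           = A^4 * (\<integral>t. f t ^ 4 \<partial>M) + 6 * A^2 * c^2 * (\<integral>t. f t ^ 2 \<partial>M) + c^4"
proof -
  have "integrable M (\<lambda>t. f t ^ p)" for p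
    using assms(2) by (intro integrable_power_of_bounded) auto
  note powers = this[of 1] this[of 2] this[of 3] this[of 4]
  have "(\<lambda>t. (A * f t + c) ^ 4)
      = (\<lambda>t. A^4 * f t ^ 4 + (4 * A^3 * c) * f t ^ 3 + (6 * A^2 * c^2) * f t ^ 2 + (4 * A * c^3) * f t + c^4)"
    by (simp add: fun_eq_iff power2_eq_square power3_eq_cube power4_eq_xxxx algebra_simps)
  then show ?thesis
    using powers assms(3,4) prob_space by simp
qed

lemma integral_linear_form_sq:
  fixes f :: "real \<Rightarrow> real"
  assumes "finite I" and [measurable]: "f \<in> borel_measurable borel"
    and "integrable M (\<lambda>t. f t ^ 2)" and "(\<integral>t. f t \<partial>M) = 0"
  shows "(\<integral>\<omega>. (\<Sum>j\<in>I. a j * f (\<omega> j)) ^ 2 \<partial>Pi\<^sub>M I (\<lambda>_. M)) = (\<Sum>j\<in>I. (a j)^2) * (\<integral>t. f t ^ 2 \<partial>M)"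
  using assms(1)
proof (induction I)
  case empty
  then show ?case by simp
next
  case (insert k I)
  interpret product_sigma_finite "\<lambda>_. M"
    by unfold_locales
  interpret P: prob_space "Pi\<^sub>M I (\<lambda>_. M)"
    by (rule prob_space_PiM_power)
  have f: "integrable M f"
    by (rule square_integrable_imp_integrable[OF _ assms(3)]) simp
  define Y where "Y x = (\<Sum>j\<in>I. a j * f (x j))" for x
  have update: "(\<Sum>j\<in>insert k I. a j * f ((x(k := y)) j)) = a k * f y + Y x" for x y
  proof -
    have "(\<Sum>j\<in>I. a j * f ((x(k := y)) j)) = Y x"
      unfolding Y_def using insert.hyps(2) by (intro sum.cong) auto
    then show ?thesis
      using insert.hyps by simp
  qed
  have "(\<integral>\<omega>. (\<Sum>j\<in>insert k I. a j * f (\<omega> j)) ^ 2 \<partial>Pi\<^sub>M (insert k I) (\<lambda>_. M))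
      = (\<integral>x. (\<integral>y. (\<Sum>j\<in>insert k I. a j * f ((x(k := y)) j)) ^ 2 \<partial>M) \<partial>Pi\<^sub>M I (\<lambda>_. M))"
    using insert.hyps integrable_linear_form_sq[OF finite.insertI[OF insert.hyps(1)] assms(2,3)]
    by (rule product_integral_insert)
  also have "\<dots> = (\<integral>x. (a k)^2 * (\<integral>t. f t ^ 2 \<partial>M) + Y x ^ 2 \<partial>Pi\<^sub>M I (\<lambda>_. M))"
    unfolding update using integral_affine_sq[OF f assms(3,4)] by simp
  also have "\<dots> = (a k)^2 * (\<integral>t. f t ^ 2 \<partial>M) + (\<integral>x. Y x ^ 2 \<partial>Pi\<^sub>M I (\<lambda>_. M))"
    using integrable_linear_form_sq[OF insert.hyps(1) assms(2,3)]
    unfolding Y_def by (simp add: P.prob_space)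
  finally show ?case
    using insert.IH insert.hyps by (simp add: Y_def algebra_simps)
qed

lemma integral_linear_form_fourth_le:
  fixes f :: "real \<Rightarrow> real"
  assumes "finite I" and [measurable]: "f \<in> borel_measurable borel" and "\<And>t. \<bar>f t\<bar> \<le> B"
    and "(\<integral>t. f t \<partial>M) = 0" and "(\<integral>t. f t ^ 3 \<partial>M) = 0"
  shows "(\<integral>\<omega>. (\<Sum>j\<in>I. a j * f (\<omega> j)) ^ 4 \<partial>Pi\<^sub>M I (\<lambda>_. M))
           \<le> 3 * (\<Sum>j\<in>I. (a j)^2)^2 * (\<integral>t. f t ^ 2 \<partial>M)^2 + (\<integral>t. f t ^ 4 \<partial>M) * (\<Sum>j\<in>I. (a j)^4)"
  using assms(1)
proof (induction I)
  case empty
  then show ?case by simp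
next
  case (insert k I)
  interpret product_sigma_finite "\<lambda>_. M"
    by unfold_locales
  interpret P: prob_space "Pi\<^sub>M I (\<lambda>_. M)"
    by (rule prob_space_PiM_power)
  define m2 where "m2 = (\<integral>t. f t ^ 2 \<partial>M)"
  define m4 where "m4 = (\<integral>t. f t ^ 4 \<partial>M)"
  define Y where "Y x = (\<Sum>j\<in>I. a j * f (x j))" for x
  have "integrable M (\<lambda>t. f t ^ 2)"
    using assms(3) by (intro integrable_power_of_bounded) auto
  with insert.hyps(1) assms(2,4) have Y2: "(\<integral>x. Y x ^ 2 \<partial>Pi\<^sub>M I (\<lambda>_. M)) = (\<Sum>j\<in>I. (a j)^2) * m2"
    unfolding Y_def m2_def by (intro integral_linear_form_sq)
  have update: "(\<Sum>j\<in>insert k I. a j * f ((x(k := y)) j)) = a k * f y + Y x" for x y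
  proof -
    have "(\<Sum>j\<in>I. a j * f ((x(k := y)) j)) = Y x"
      unfolding Y_def using insert.hyps(2) by (intro sum.cong refl) auto
    then show ?thesis
      using insert.hyps by simp
  qed
  have "(\<integral>\<omega>. (\<Sum>j\<in>insert k I. a j * f (\<omega> j)) ^ 4 \<partial>Pi\<^sub>M (insert k I) (\<lambda>_. M))
      = (\<integral>x. (\<integral>y. (\<Sum>j\<in>insert k I. a j * f ((x(k := y)) j)) ^ 4 \<partial>M) \<partial>Pi\<^sub>M I (\<lambda>_. M))"
    using insert.hyps integrable_linear_form_power[OF assms(2,3)]
    by (rule product_integral_insert)
  also have "\<dots> = (\<integral>x. (a k)^4 * m4 + (6 * (a k)^2 * m2) * Y x ^ 2 + Y x ^ 4 \<partial>Pi\<^sub>M I (\<lambda>_. M))"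
    unfolding update integral_affine_fourth[OF assms(2-5)] by (simp add: m2_def m4_def algebra_simps)
  also have "\<dots> = (a k)^4 * m4 + (6 * (a k)^2 * m2) * ((\<Sum>j\<in>I. (a j)^2) * m2)
                    + (\<integral>x. Y x ^ 4 \<partial>Pi\<^sub>M I (\<lambda>_. M))"
    using integrable_linear_form_power[OF assms(2,3), of I a 2]
      integrable_linear_form_power[OF assms(2,3), of I a 4] Y2
    unfolding Y_def by (simp add: P.prob_space)
  also have "\<dots> \<le> 3 * (\<Sum>j\<in>insert k I. (a j)^2)^2 * m2^2 + m4 * (\<Sum>j\<in>insert k I. (a j)^4)"
  proof -
    have "0 \<le> 3 * (a k)^4 * m2^2"
      by simp
    then show ?thesis
      using insert.IH insert.hyps unfolding Y_def m2_def m4_def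
      by (simp add: power2_eq_square power4_eq_xxxx algebra_simps)
  qed
  finally show ?case
    unfolding m2_def m4_def .
qed

lemma integral_truncation_tail_sq_le:
  assumes "0 < K" and "integrable M (\<lambda>t. \<bar>t\<bar> ^ 3)"
  shows "(\<integral>t. (t - truncation K t) ^ 2 \<partial>M) \<le> (\<integral>t. \<bar>t\<bar> ^ 3 \<partial>M) / K"
proof -
  have "(\<integral>t. (t - truncation K t) ^ 2 \<partial>M) \<le> (\<integral>t. \<bar>t\<bar> ^ 3 / K \<partial>M)"
  proof (rule integral_mono')
    fix t :: real
    show "(t - truncation K t) ^ 2 \<le> \<bar>t\<bar> ^ 3 / K"
    proof (cases "\<bar>t\<bar> \<le> K")
      case False
      then have "K * \<bar>t\<bar> ^ 2 \<le> \<bar>t\<bar> * \<bar>t\<bar> ^ 2"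
        by (intro mult_right_mono) auto
      then show ?thesis
        using False assms(1) by (simp add: truncation_def field_simps power2_eq_square power3_eq_cube)
    qed (use assms(1) in \<open>simp add: truncation_def\<close>)
  qed (use assms in auto)
  then show ?thesis
    by simp
qed

lemma integral_truncation_fourth_le:
  assumes "0 \<le> K" and "integrable M (\<lambda>t. \<bar>t\<bar> ^ 3)"
  shows "(\<integral>t. truncation K t ^ 4 \<partial>M) \<le> K * (\<integral>t. \<bar>t\<bar> ^ 3 \<partial>M)"
proof -
  have "(\<integral>t. truncation K t ^ 4 \<partial>M) \<le> (\<integral>t. K * \<bar>t\<bar> ^ 3 \<partial>M)"
  proof (rule integral_mono')
    fix t :: real
    show "truncation K t ^ 4 \<le> K * \<bar>t\<bar> ^ 3"
    proof (cases "\<bar>t\<bar> \<le> K")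
      case True
      then have "\<bar>t\<bar> * \<bar>t\<bar> ^ 3 \<le> K * \<bar>t\<bar> ^ 3"
        by (intro mult_right_mono) auto
      then show ?thesis
        using True by (simp add: truncation_def power4_eq_xxxx power3_eq_cube abs_mult_self_eq mult_ac)
    qed (use assms(1) in \<open>simp add: truncation_def\<close>)
  qed (use assms in auto)
  then show ?thesis
    by simp
qed

lemma integral_truncation_sq_bounds:
  assumes var: "(\<integral>t. t ^ 2 \<partial>M) = 1" and third: "integrable M (\<lambda>t. \<bar>t\<bar> ^ 3)" and K: "0 < K"
  shows "1 - (\<integral>t. \<bar>t\<bar> ^ 3 \<partial>M) / K \<le> (\<integral>t. truncation K t ^ 2 \<partial>M)"
    and "(\<integral>t. truncation K t ^ 2 \<partial>M) \<le> 1"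
proof -
  \<comment> \<open>A non-integrable function has Bochner integral \<open>0\<close>.\<close>
  have sq: "integrable M (\<lambda>t. t ^ 2)"
    using var not_integrable_integral_eq by fastforce
  have tail: "integrable M (\<lambda>t. (t - truncation K t) ^ 2)"
    by (rule Bochner_Integration.integrable_bound[OF sq]) (auto simp: truncation_def)
  have "(\<lambda>t. truncation K t ^ 2) = (\<lambda>t. t ^ 2 - (t - truncation K t) ^ 2)"
    by (auto simp: fun_eq_iff truncation_def)
  then have "(\<integral>t. truncation K t ^ 2 \<partial>M) = 1 - (\<integral>t. (t - truncation K t) ^ 2 \<partial>M)"
    using sq tail var by simp
  moreover have "0 \<le> (\<integral>t. (t - truncation K t) ^ 2 \<partial>M)"
    by (intro integral_nonneg_AE) auto
  ultimately show "1 - (\<integral>t. \<bar>t\<bar> ^ 3 \<partial>M) / K \<le> (\<integral>t. truncation K t ^ 2 \<partial>M)"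
    and "(\<integral>t. truncation K t ^ 2 \<partial>M) \<le> 1"
    using integral_truncation_tail_sq_le[OF K third] by linarith+
qed

lemma integral_truncated_linear_form_moments:
  assumes sym: "symmetric_distr M" and var: "(\<integral>t. t ^ 2 \<partial>M) = 1"
    and third: "integrable M (\<lambda>t. \<bar>t\<bar> ^ 3)" and K: "0 < K"
    and "finite I" and x: "(\<Sum>j\<in>I. (x j)^2) = 1"
  shows "1 - (\<integral>t. \<bar>t\<bar> ^ 3 \<partial>M) / K
           \<le> (\<integral>\<omega>. (\<Sum>j\<in>I. x j * truncation K (\<omega> j)) ^ 2 \<partial>Pi\<^sub>M I (\<lambda>_. M))"
    and "(\<integral>\<omega>. (\<Sum>j\<in>I. x j * truncation K (\<omega> j)) ^ 4 \<partial>Pi\<^sub>M I (\<lambda>_. M))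
           \<le> 3 + K * (\<integral>t. \<bar>t\<bar> ^ 3 \<partial>M) * (\<Sum>j\<in>I. (x j)^4)"
proof -
  have bound: "\<bar>truncation K t\<bar> \<le> K" for t
    using K by (intro abs_truncation_le) simp
  have odd: "(\<integral>t. truncation K t \<partial>M) = 0" "(\<integral>t. truncation K t ^ 3 \<partial>M) = 0"
    using sym by (auto intro!: integral_odd_eq_zero simp: truncation_uminus)
  have "integrable M (\<lambda>t. truncation K t ^ 2)"
    using bound by (intro integrable_power_of_bounded) auto
  then show "1 - (\<integral>t. \<bar>t\<bar> ^ 3 \<partial>M) / K
      \<le> (\<integral>\<omega>. (\<Sum>j\<in>I. x j * truncation K (\<omega> j)) ^ 2 \<partial>Pi\<^sub>M I (\<lambda>_. M))"
    using integral_linear_form_sq[OF \<open>finite I\<close> _ _ odd(1)] integral_truncation_sq_bounds(1)[OF var third K] x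
    by simp
  have "(\<integral>\<omega>. (\<Sum>j\<in>I. x j * truncation K (\<omega> j)) ^ 4 \<partial>Pi\<^sub>M I (\<lambda>_. M))
          \<le> 3 * (\<integral>t. truncation K t ^ 2 \<partial>M)^2 + (\<integral>t. truncation K t ^ 4 \<partial>M) * (\<Sum>j\<in>I. (x j)^4)"
    using integral_linear_form_fourth_le[OF \<open>finite I\<close> _ bound odd, where a = x] x by simp
  also have "\<dots> \<le> 3 + K * (\<integral>t. \<bar>t\<bar> ^ 3 \<partial>M) * (\<Sum>j\<in>I. (x j)^4)"
    using integral_truncation_sq_bounds(2)[OF var third K] integral_truncation_fourth_le[OF less_imp_le[OF K] third]
    by (intro add_mono mult_right_mono) (auto simp: power_le_one sum_nonneg integral_nonneg_AE)
  finally show "(\<integral>\<omega>. (\<Sum>j\<in>I. x j * truncation K (\<omega> j)) ^ 4 \<partial>Pi\<^sub>M I (\<lambda>_. M))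
      \<le> 3 + K * (\<integral>t. \<bar>t\<bar> ^ 3 \<partial>M) * (\<Sum>j\<in>I. (x j)^4)" .
qed

lemma integral_tail_linear_form_sq_le:
  assumes sym: "symmetric_distr M" and var: "(\<integral>t. t ^ 2 \<partial>M) = 1"
    and third: "integrable M (\<lambda>t. \<bar>t\<bar> ^ 3)" and K: "0 < K"
    and "finite I" and x: "(\<Sum>j\<in>I. (x j)^2) = 1"
  shows "integrable (Pi\<^sub>M I (\<lambda>_. M)) (\<lambda>\<omega>. (\<Sum>j\<in>I. x j * (\<omega> j - truncation K (\<omega> j))) ^ 2)"
    and "(\<integral>\<omega>. (\<Sum>j\<in>I. x j * (\<omega> j - truncation K (\<omega> j))) ^ 2 \<partial>Pi\<^sub>M I (\<lambda>_. M))
           \<le> (\<integral>t. \<bar>t\<bar> ^ 3 \<partial>M) / K"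
proof -
  define tail where "tail t = t - truncation K t" for t
  have [measurable]: "tail \<in> borel_measurable borel"
    unfolding tail_def by measurable
  have "integrable M (\<lambda>t. t ^ 2)"
    using var not_integrable_integral_eq by fastforce
  then have tail_sq: "integrable M (\<lambda>t. tail t ^ 2)"
    by (rule Bochner_Integration.integrable_bound) (auto simp: tail_def truncation_def)
  have "(\<integral>t. tail t \<partial>M) = 0"
    using sym by (auto intro!: integral_odd_eq_zero simp: truncation_uminus tail_def)
  then show "(\<integral>\<omega>. (\<Sum>j\<in>I. x j * (\<omega> j - truncation K (\<omega> j))) ^ 2 \<partial>Pi\<^sub>M I (\<lambda>_. M))
      \<le> (\<integral>t. \<bar>t\<bar> ^ 3 \<partial>M) / K"
    using integral_linear_form_sq[OF \<open>finite I\<close> _ tail_sq] integral_truncation_tail_sq_le[OF K third] x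
    by (simp add: tail_def)
  show "integrable (Pi\<^sub>M I (\<lambda>_. M)) (\<lambda>\<omega>. (\<Sum>j\<in>I. x j * (\<omega> j - truncation K (\<omega> j))) ^ 2)"
    using integrable_linear_form_sq[OF \<open>finite I\<close> _ tail_sq] by (simp add: tail_def)
qed

lemma integral_abs_linear_form_ge_truncation:
  assumes sym: "symmetric_distr M" and var: "(\<integral>t. t ^ 2 \<partial>M) = 1"
    and third: "integrable M (\<lambda>t. \<bar>t\<bar> ^ 3)" and K: "0 < K"
    and "finite I" and x: "(\<Sum>j\<in>I. (x j)^2) = 1"
  shows "(6/7) * (1 - (\<integral>t. \<bar>t\<bar> ^ 3 \<partial>M) / K)
           - (32/343) * (3 + K * (\<integral>t. \<bar>t\<bar> ^ 3 \<partial>M) * (\<Sum>j\<in>I. (x j)^4))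
           - 20 * ((\<integral>t. \<bar>t\<bar> ^ 3 \<partial>M) / K) - 1/80
         \<le> (\<integral>\<omega>. \<bar>\<Sum>j\<in>I. \<omega> j * x j\<bar> \<partial>Pi\<^sub>M I (\<lambda>_. M))"
proof -
  interpret P: prob_space "Pi\<^sub>M I (\<lambda>_. M)"
    by (rule prob_space_PiM_power)
  define T where "T \<omega> = (\<Sum>j\<in>I. x j * truncation K (\<omega> j))" for \<omega>
  define R where "R \<omega> = (\<Sum>j\<in>I. x j * (\<omega> j - truncation K (\<omega> j)))" for \<omega>
  note T_moments = integral_truncated_linear_form_moments[OF assms, folded T_def]
  note R_moment = integral_tail_linear_form_sq_le[OF assms, folded R_def]
  have "\<bar>truncation K t\<bar> \<le> K" for t
    using K by (intro abs_truncation_le) simp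
  then have T_pow: "integrable (Pi\<^sub>M I (\<lambda>_. M)) (\<lambda>\<omega>. T \<omega> ^ p)" for p
    unfolding T_def by (rule integrable_linear_form_power[OF truncation_measurable])
  have "integrable (Pi\<^sub>M I (\<lambda>_. M)) R"
    using R_moment(1) by (rule P.square_integrable_imp_integrable[rotated]) (simp add: R_def)
  moreover have "integrable (Pi\<^sub>M I (\<lambda>_. M)) T"
    using T_pow[of 1] by simp
  ultimately have "integrable (Pi\<^sub>M I (\<lambda>_. M)) (\<lambda>\<omega>. T \<omega> + R \<omega>)"
    by simp
  note quartic = P.expectation_abs_sum_ge_quartic[OF T_pow T_pow R_moment(1) this]
  have sum_eq: "T \<omega> + R \<omega> = (\<Sum>j\<in>I. \<omega> j * x j)" for \<omega>
    by (simp add: T_def R_def sum.distrib[symmetric] algebra_simps)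
  have "(6/7) * (1 - (\<integral>t. \<bar>t\<bar> ^ 3 \<partial>M) / K) \<le> (6/7) * (\<integral>\<omega>. T \<omega> ^ 2 \<partial>Pi\<^sub>M I (\<lambda>_. M))"
    using T_moments(1) by simp
  moreover have "(32/343) * (\<integral>\<omega>. T \<omega> ^ 4 \<partial>Pi\<^sub>M I (\<lambda>_. M))
      \<le> (32/343) * (3 + K * (\<integral>t. \<bar>t\<bar> ^ 3 \<partial>M) * (\<Sum>j\<in>I. (x j)^4))"
    using T_moments(2) by simp
  moreover have "20 * (\<integral>\<omega>. R \<omega> ^ 2 \<partial>Pi\<^sub>M I (\<lambda>_. M)) \<le> 20 * ((\<integral>t. \<bar>t\<bar> ^ 3 \<partial>M) / K)"
    using R_moment(2) by simp
  ultimately show ?thesis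
    using quartic[unfolded sum_eq] by linarith
qed

lemma integral_abs_linear_form_ge:
  assumes sym: "symmetric_distr M" and var: "(\<integral>t. t ^ 2 \<partial>M) = 1"
    and "finite I" and x: "(\<Sum>j\<in>I. (x j)^2) = 1"
    and x_small: "\<forall>j\<in>I. \<bar>x j\<bar> \<le> (1/1600) / (\<integral>t. \<bar>t\<bar> ^ 3 \<partial>M)"
  shows "11/20 \<le> (\<integral>\<omega>. \<bar>\<Sum>j\<in>I. \<omega> j * x j\<bar> \<partial>Pi\<^sub>M I (\<lambda>_. M))"
proof -
  define m3 where "m3 = (\<integral>t. \<bar>t\<bar> ^ 3 \<partial>M)"
  have "\<exists>i\<in>I. x i \<noteq> 0"
  proof (rule ccontr)
    assume "\<not> (\<exists>i\<in>I. x i \<noteq> 0)"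
    then have "(\<Sum>j\<in>I. (x j)^2) = 0"
      by simp
    with x show False
      by simp
  qed
  then obtain i where "i \<in> I" "x i \<noteq> 0"
    by blast
  then have "0 < (1/1600) / m3"
    using x_small less_le_trans[of 0 "\<bar>x i\<bar>" "(1/1600) / m3"] unfolding m3_def by simp
  then have m3: "0 < m3"
    by (simp add: zero_less_divide_iff)
  have third: "integrable M (\<lambda>t. \<bar>t\<bar> ^ 3)"
    using m3 not_integrable_integral_eq unfolding m3_def by fastforce
  have "(\<Sum>j\<in>I. (x j)^4) \<le> ((1/1600) / m3)^2"
    using sum_power4_le[of I x "(1/1600) / m3"] x_small x unfolding m3_def by simp
  then have x4: "1600 * m3 * m3 * (\<Sum>j\<in>I. (x j)^4) \<le> 1/1600"
    using m3 by (simp add: field_simps power2_eq_square)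
  have "(6/7) * (1 - 1/1600) - (32/343) * (3 + 1600 * m3 * m3 * (\<Sum>j\<in>I. (x j)^4)) - 20 * (1/1600) - 1/80
      \<le> (\<integral>\<omega>. \<bar>\<Sum>j\<in>I. \<omega> j * x j\<bar> \<partial>Pi\<^sub>M I (\<lambda>_. M))"
    using integral_abs_linear_form_ge_truncation[OF sym var third _ \<open>finite I\<close> x, of "1600 * m3"] m3
    unfolding m3_def[symmetric] by simp
  with x4 show ?thesis
    by argo
qed

lemma sum_sign_correlation_mult:
  assumes "finite I" and "integrable M (\<lambda>t. t)"
  shows "(\<Sum>i\<in>I. sign_correlation M I x i * y i)
           = (\<integral>\<omega>. sign0 (\<Sum>j\<in>I. \<omega> j * x j) * (\<Sum>i\<in>I. \<omega> i * y i) \<partial>Pi\<^sub>M I (\<lambda>_. M))"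
proof -
  let ?S = "\<lambda>\<omega>. \<Sum>j\<in>I. \<omega> j * x j"
  have "(\<lambda>\<omega>. \<Sum>j\<in>I. x j * (\<lambda>t. t) (\<omega> j)) \<in> borel_measurable (Pi\<^sub>M I (\<lambda>_. M))"
    by (rule measurable_linear_form) simp
  then have "?S \<in> borel_measurable (Pi\<^sub>M I (\<lambda>_. M))"
    by (simp add: mult.commute)
  then have sign_S: "(\<lambda>\<omega>. sign0 (?S \<omega>)) \<in> borel_measurable (Pi\<^sub>M I (\<lambda>_. M))"
    using sign0_measurable by (rule measurable_compose)
  have integrable: "integrable (Pi\<^sub>M I (\<lambda>_. M)) (\<lambda>\<omega>. sign0 (?S \<omega>) * \<omega> i * y i)" if "i \<in> I" for i
  proof (rule Bochner_Integration.integrable_mult_left, rule Bochner_Integration.integrable_bound)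
    show "integrable (Pi\<^sub>M I (\<lambda>_. M)) (\<lambda>\<omega>. \<omega> i)"
      using that assms(2) by (rule integral_PiM_component(1))
    show "(\<lambda>\<omega>. sign0 (?S \<omega>) * \<omega> i) \<in> borel_measurable (Pi\<^sub>M I (\<lambda>_. M))"
    proof -
      have "(\<lambda>\<omega>. \<omega> i) \<in> borel_measurable (Pi\<^sub>M I (\<lambda>_. M))"
        using that by measurable
      with sign_S show ?thesis
        by (rule borel_measurable_times)
    qed
    show "AE \<omega> in Pi\<^sub>M I (\<lambda>_. M). norm (sign0 (?S \<omega>) * \<omega> i) \<le> norm (\<omega> i)"
      by (simp add: abs_sign0_mult)
  qed
  have "(\<Sum>i\<in>I. sign_correlation M I x i * y i) = (\<Sum>i\<in>I. \<integral>\<omega>. sign0 (?S \<omega>) * \<omega> i * y i \<partial>Pi\<^sub>M I (\<lambda>_. M))"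
    by (simp add: sign_correlation_def)
  also have "\<dots> = (\<integral>\<omega>. (\<Sum>i\<in>I. sign0 (?S \<omega>) * \<omega> i * y i) \<partial>Pi\<^sub>M I (\<lambda>_. M))"
    using integrable by (subst Bochner_Integration.integral_sum) auto
  also have "\<dots> = (\<integral>\<omega>. sign0 (?S \<omega>) * (\<Sum>i\<in>I. \<omega> i * y i) \<partial>Pi\<^sub>M I (\<lambda>_. M))"
    by (simp add: sum_distrib_left mult.assoc)
  finally show ?thesis .
qed

lemma L2_set_sign_correlation_le_one:
  assumes "finite I" and sq: "integrable M (\<lambda>t. t ^ 2)"
    and mean: "(\<integral>t. t \<partial>M) = 0" and var: "(\<integral>t. t ^ 2 \<partial>M) = 1"
  shows "L2_set (sign_correlation M I x) I \<le> 1"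
proof -
  interpret P: prob_space "Pi\<^sub>M I (\<lambda>_. M)"
    by (rule prob_space_PiM_power)
  define v where "v = sign_correlation M I x"
  define Z where "Z \<omega> = (\<Sum>i\<in>I. \<omega> i * v i)" for \<omega>
  have Z_linear: "Z = (\<lambda>\<omega>. \<Sum>i\<in>I. v i * (\<lambda>t. t) (\<omega> i))"
    by (simp add: Z_def fun_eq_iff mult.commute)
  have Z_meas: "Z \<in> borel_measurable (Pi\<^sub>M I (\<lambda>_. M))"
    unfolding Z_linear by (rule measurable_linear_form) simp
  have Z_sq: "integrable (Pi\<^sub>M I (\<lambda>_. M)) (\<lambda>\<omega>. Z \<omega> ^ 2)"
    unfolding Z_linear using assms(1) _ sq by (rule integrable_linear_form_sq) simp
  have "integrable (Pi\<^sub>M I (\<lambda>_. M)) Z"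
    using Z_sq by (rule P.square_integrable_imp_integrable[OF Z_meas])
  then have Z_abs: "integrable (Pi\<^sub>M I (\<lambda>_. M)) (\<lambda>\<omega>. \<bar>Z \<omega>\<bar>)"
    by (rule integrable_abs)
  have "integrable M (\<lambda>t. t)"
    using sq by (rule square_integrable_imp_integrable[rotated]) simp
  have "(L2_set v I)^2 = (\<Sum>i\<in>I. v i * v i)"
    by (simp add: L2_set_def sum_nonneg power2_eq_square)
  also have "\<dots> = (\<integral>\<omega>. sign0 (\<Sum>j\<in>I. \<omega> j * x j) * Z \<omega> \<partial>Pi\<^sub>M I (\<lambda>_. M))"
    unfolding Z_def v_def using assms(1) \<open>integrable M (\<lambda>t. t)\<close> by (rule sum_sign_correlation_mult)
  also have "\<dots> \<le> (\<integral>\<omega>. \<bar>Z \<omega>\<bar> \<partial>Pi\<^sub>M I (\<lambda>_. M))"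
    using Z_abs by (rule integral_mono') (auto simp: sign0_def)
  also have "\<dots> \<le> sqrt (\<integral>\<omega>. Z \<omega> ^ 2 \<partial>Pi\<^sub>M I (\<lambda>_. M))"
    using Z_meas Z_sq by (rule P.expectation_abs_le_sqrt_second_moment)
  also have "(\<integral>\<omega>. Z \<omega> ^ 2 \<partial>Pi\<^sub>M I (\<lambda>_. M)) = (\<Sum>i\<in>I. (v i)^2)"
    unfolding Z_linear using integral_linear_form_sq[OF assms(1) _ sq mean, of v] var by simp
  finally have "L2_set v I * L2_set v I \<le> L2_set v I * 1"
    by (simp add: L2_set_def power2_eq_square)
  then show ?thesis
    unfolding v_def[symmetric] using L2_set_nonneg[of v I] by (cases "L2_set v I = 0") auto
qed

lemma integral_abs_linear_form_le_L2_set_sign_correlation: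
  assumes "finite I" and "integrable M (\<lambda>t. t)" and x: "(\<Sum>j\<in>I. (x j)^2) = 1"
  shows "(\<integral>\<omega>. \<bar>\<Sum>j\<in>I. \<omega> j * x j\<bar> \<partial>Pi\<^sub>M I (\<lambda>_. M)) \<le> L2_set (sign_correlation M I x) I"
proof -
  have "(\<integral>\<omega>. \<bar>\<Sum>j\<in>I. \<omega> j * x j\<bar> \<partial>Pi\<^sub>M I (\<lambda>_. M)) = (\<Sum>i\<in>I. sign_correlation M I x i * x i)"
    using sum_sign_correlation_mult[OF assms(1,2)] by (simp add: sign0_mult_self)
  also have "\<dots> \<le> (\<Sum>i\<in>I. \<bar>sign_correlation M I x i\<bar> * \<bar>x i\<bar>)"
    by (intro sum_mono) (simp add: abs_mult[symmetric])
  also have "\<dots> \<le> L2_set (sign_correlation M I x) I * L2_set x I"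
    by (rule L2_set_mult_ineq)
  finally show ?thesis
    using x by (simp add: L2_set_def)
qed

end

theorem lemma4p4:
  shows "\<exists>c::real. c > 0 \<and>
    (\<forall>(D::real measure) (n::nat) (x::nat \<Rightarrow> real).
       prob_space D \<longrightarrow> sets D = sets borel \<longrightarrow>
       symmetric_distr D \<longrightarrow> subgaussian D \<longrightarrow>
       (\<integral>t. t\<^sup>2 \<partial>D) = 1 \<longrightarrow>
       (\<Sum>i<n. (x i)\<^sup>2) = 1 \<longrightarrow>
       (\<forall>i<n. \<bar>x i\<bar> \<le> c / (\<integral>t. \<bar>t\<bar> ^ 3 \<partial>D)) \<longrightarrow>
       (let v = (\<lambda>i. \<integral>\<omega>. sign0 (\<Sum>j<n. \<omega> j * x j) * \<omega> i \<partial>(PiM {..<n} (\<lambda>_. D)))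
        in 1/2 \<le> sqrt (\<Sum>i<n. (v i)\<^sup>2) \<and> sqrt (\<Sum>i<n. (v i)\<^sup>2) \<le> 1))"
proof (intro exI[of _ "1/1600"] conjI allI impI)
  fix D :: "real measure" and n :: nat and x :: "nat \<Rightarrow> real"
  assume "prob_space D" "sets D = sets borel" and sym: "symmetric_distr D"
    and var: "(\<integral>t. t\<^sup>2 \<partial>D) = 1" and x: "(\<Sum>i<n. (x i)\<^sup>2) = 1"
    and x_small: "\<forall>i<n. \<bar>x i\<bar> \<le> 1/1600 / (\<integral>t. \<bar>t\<bar> ^ 3 \<partial>D)"
  then interpret real_distribution D
    by (simp add: real_distribution_def real_distribution_axioms_def)
  have sq: "integrable D (\<lambda>t. t ^ 2)"
    using var not_integrable_integral_eq by fastforce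
  then have "integrable D (\<lambda>t. t)"
    by (rule square_integrable_imp_integrable[rotated]) simp
  moreover have "(\<integral>t. t \<partial>D) = 0"
    using sym by (rule integral_odd_eq_zero) auto
  moreover have "1/2 \<le> (\<integral>\<omega>. \<bar>\<Sum>j<n. \<omega> j * x j\<bar> \<partial>Pi\<^sub>M {..<n} (\<lambda>_. D))"
    using integral_abs_linear_form_ge[OF sym var _ x] x_small by simp
  ultimately show "let v = (\<lambda>i. \<integral>\<omega>. sign0 (\<Sum>j<n. \<omega> j * x j) * \<omega> i \<partial>(PiM {..<n} (\<lambda>_. D)))
        in 1/2 \<le> sqrt (\<Sum>i<n. (v i)\<^sup>2) \<and> sqrt (\<Sum>i<n. (v i)\<^sup>2) \<le> 1"
    using integral_abs_linear_form_le_L2_set_sign_correlation[of "{..<n}" x]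
      L2_set_sign_correlation_le_one[OF _ sq _ var, of "{..<n}" x] x
    by (simp add: Let_def L2_set_def sign_correlation_def)
qed simp

end
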